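(* A green Veldkamp quadrangle $\Gamma$ is flat if and only if $\Gamma$ contains no weeds.
   Context: A graph is a pair $(V,E)$ with $E$ a set of $2$-element subsets of $V$; $\Gamma_v$ is the set of neighbors of $v$. An $s$-path is a sequence $(x_0,\dots,x_s)$ of vertices with consecutive vertices adjacent and $x_{i-2}\ne x_i$ for $i\in[2,s]$; ${\rm dist}$ is graph distance. A closed $s$-path is an $s$-path with $s\ge3$ whose first and last vertices coincide; an $s$-circuit is the subgraph determined by a closed $s$-path. An opposition relation on a set $X$ is a symmetric anti-reflexive relation; trivial if any two distinct elements are related; $k$-plump if for every $S\subseteq X$ with $|S|\le k$ some element of $X$ is related to all elements of $S$. A Veldkamp graph is a graph with a $2$-plump opposition relation $\equiv_v$ on $\Gamma_v$ for each vertex $v$. A path $(v_0,\dots,v_s)$ is straight if $v_{i-1}\equiv_{v_i}v_{i+1}$ for all $i\in[1,s-1]$; a circuit is straight if every path in it is straight. A Veldkamp $n$-gon ($n\ge2$) is a Veldkamp graph satisfying (VP1) connected and bipartite; (VP2) for each $k\in[1,n-1]$ each straight $k$-path is the unique straight path between its endpoints of length at most $k$; (VP3) every straight $(n+1)$-path lies in a straight $2n$-circuit. A root is a straight $n$-path; two vertices are opposite if there is a root between them; $x^{\rm op}$ is the set of vertices opposite $x$; the polygon is flat if $x^{\rm op}=y^{\rm op}$ implies $x=y$ for all vertices $x,y$. A Veldkamp quadrangle is a Veldkamp $4$-gon, with bipartition classes called points $P$ and lines $L$; it is green if $\equiv_x$ is trivial for every line $x$. A weed is a non-straight $4$-path $(a,x,b,y,c)$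 with $a,b,c\in P$ and ${\rm dist}(a,c)=4$. *)

theory Defs
  imports Main
begin

definition graph :: "'a set \<Rightarrow> 'a set set \<Rightarrow> bool" where
  "graph V E \<longleftrightarrow> (\<forall>e\<in>E. \<exists>x y. x \<noteq> y \<and> x \<in> V \<and> y \<in> V \<and> e = {x, y})"

definition nbrs :: "'a set set \<Rightarrow> 'a \<Rightarrow> 'a set" where
  "nbrs E v = {u. {v, u} \<in> E}"

definition opposition_rel :: "'a set \<Rightarrow> ('a \<Rightarrow> 'a \<Rightarrow> bool) \<Rightarrow> bool" where
  "opposition_rel X R \<longleftrightarrow> (\<forall>x y. R x y \<longrightarrow> x \<in> X \<and> y \<in> X)
     \<and> (\<forall>x y. R x y \<longrightarrow> R y x) \<and> (\<forall>x. \<not> R x x)"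

definition trivial_opp :: "'a set \<Rightarrow> ('a \<Rightarrow> 'a \<Rightarrow> bool) \<Rightarrow> bool" where
  "trivial_opp X R \<longleftrightarrow> (\<forall>x\<in>X. \<forall>y\<in>X. x \<noteq> y \<longrightarrow> R x y)"

definition plump :: "nat \<Rightarrow> 'a set \<Rightarrow> ('a \<Rightarrow> 'a \<Rightarrow> bool) \<Rightarrow> bool" where
  "plump k X R \<longleftrightarrow> (\<forall>S. S \<subseteq> X \<and> finite S \<and> card S \<le> k \<longrightarrow> (\<exists>x\<in>X. \<forall>s\<in>S. R x s))"

definition veldkamp_graph :: "'a set \<Rightarrow> 'a set set \<Rightarrow> ('a \<Rightarrow> 'a \<Rightarrow> 'a \<Rightarrow> bool) \<Rightarrow> bool" where
  "veldkamp_graph V E opp \<longleftrightarrow> graph V E \<and>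
     (\<forall>v\<in>V. opposition_rel (nbrs E v) (opp v) \<and> plump 2 (nbrs E v) (opp v))"

definition is_walk :: "'a set \<Rightarrow> 'a set set \<Rightarrow> 'a list \<Rightarrow> bool" where
  "is_walk V E xs \<longleftrightarrow> xs \<noteq> [] \<and> set xs \<subseteq> V \<and>
     (\<forall>i. Suc i < length xs \<longrightarrow> {xs ! i, xs ! Suc i} \<in> E)"

(* s-paths: walks without immediate backtracking; the length s is length xs - 1 *)
definition is_path :: "'a set \<Rightarrow> 'a set set \<Rightarrow> 'a list \<Rightarrow> bool" where
  "is_path V E xs \<longleftrightarrow> is_walk V E xs \<and>
     (\<forall>i. i + 2 < length xs \<longrightarrow> xs ! i \<noteq> xs ! (i + 2))"

definition plen :: "'a list \<Rightarrow> nat" where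
  "plen xs = length xs - 1"

definition gdist :: "'a set \<Rightarrow> 'a set set \<Rightarrow> 'a \<Rightarrow> 'a \<Rightarrow> nat" where
  "gdist V E a b = (LEAST n. \<exists>w. is_walk V E w \<and> hd w = a \<and> last w = b \<and> plen w = n)"

definition connected_graph :: "'a set \<Rightarrow> 'a set set \<Rightarrow> bool" where
  "connected_graph V E \<longleftrightarrow> (\<forall>a\<in>V. \<forall>b\<in>V. \<exists>w. is_walk V E w \<and> hd w = a \<and> last w = b)"

definition bipartite :: "'a set \<Rightarrow> 'a set set \<Rightarrow> bool" where
  "bipartite V E \<longleftrightarrow> (\<exists>f :: 'a \<Rightarrow> bool. \<forall>x y. {x, y} \<in> E \<longrightarrow> f x \<noteq> f y)"

definition straight :: "('a \<Rightarrow> 'a \<Rightarrow> 'a \<Rightarrow> bool) \<Rightarrow> 'a list \<Rightarrow> bool" where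
  "straight opp xs \<longleftrightarrow> (\<forall>i. i + 2 < length xs \<longrightarrow> opp (xs ! (i + 1)) (xs ! i) (xs ! (i + 2)))"

definition closed_path :: "'a set \<Rightarrow> 'a set set \<Rightarrow> 'a list \<Rightarrow> bool" where
  "closed_path V E xs \<longleftrightarrow> is_path V E xs \<and> plen xs \<ge> 3 \<and> hd xs = last xs"

(* the subgraph determined by a closed path c: vertices set c, edges circ_edges c *)
definition circ_edges :: "'a list \<Rightarrow> 'a set set" where
  "circ_edges c = {{c ! i, c ! Suc i} | i. Suc i < length c}"

definition path_in_circuit :: "'a list \<Rightarrow> 'a list \<Rightarrow> bool" where
  "path_in_circuit c p \<longleftrightarrow> is_path (set c) (circ_edges c) p"

definition straight_circuit :: "('a \<Rightarrow> 'a \<Rightarrow> 'a \<Rightarrow> bool) \<Rightarrow> 'a list \<Rightarrow> bool" where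
  "straight_circuit opp c \<longleftrightarrow> (\<forall>p. path_in_circuit c p \<longrightarrow> straight opp p)"

definition veldkamp_ngon :: "nat \<Rightarrow> 'a set \<Rightarrow> 'a set set \<Rightarrow> ('a \<Rightarrow> 'a \<Rightarrow> 'a \<Rightarrow> bool) \<Rightarrow> bool" where
  "veldkamp_ngon n V E opp \<longleftrightarrow> n \<ge> 2 \<and> veldkamp_graph V E opp \<and>
     connected_graph V E \<and> bipartite V E \<and>
     (\<forall>k p q. 1 \<le> k \<and> k \<le> n - 1 \<and> is_path V E p \<and> straight opp p \<and> plen p = k \<and>
        is_path V E q \<and> straight opp q \<and> plen q \<le> k \<and> hd q = hd p \<and> last q = last p
        \<longrightarrow> q = p) \<and>
     (\<forall>p. is_path V E p \<and> straight opp p \<and> plen p = n + 1 \<longrightarrow>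
        (\<exists>c. closed_path V E c \<and> plen c = 2 * n \<and> straight_circuit opp c \<and> path_in_circuit c p))"

definition opposite :: "nat \<Rightarrow> 'a set \<Rightarrow> 'a set set \<Rightarrow> ('a \<Rightarrow> 'a \<Rightarrow> 'a \<Rightarrow> bool) \<Rightarrow> 'a \<Rightarrow> 'a \<Rightarrow> bool" where
  "opposite n V E opp x y \<longleftrightarrow>
     (\<exists>p. is_path V E p \<and> straight opp p \<and> plen p = n \<and> hd p = x \<and> last p = y)"

definition op_set :: "nat \<Rightarrow> 'a set \<Rightarrow> 'a set set \<Rightarrow> ('a \<Rightarrow> 'a \<Rightarrow> 'a \<Rightarrow> bool) \<Rightarrow> 'a \<Rightarrow> 'a set" where
  "op_set n V E opp x = {y \<in> V. opposite n V E opp x y}"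

definition flat :: "nat \<Rightarrow> 'a set \<Rightarrow> 'a set set \<Rightarrow> ('a \<Rightarrow> 'a \<Rightarrow> 'a \<Rightarrow> bool) \<Rightarrow> bool" where
  "flat n V E opp \<longleftrightarrow> (\<forall>x\<in>V. \<forall>y\<in>V. op_set n V E opp x = op_set n V E opp y \<longrightarrow> x = y)"

definition veldkamp_quadrangle ::
  "'a set \<Rightarrow> 'a set \<Rightarrow> 'a set set \<Rightarrow> ('a \<Rightarrow> 'a \<Rightarrow> 'a \<Rightarrow> bool) \<Rightarrow> bool" where
  "veldkamp_quadrangle P L E opp \<longleftrightarrow> veldkamp_ngon 4 (P \<union> L) E opp \<and> P \<inter> L = {} \<and>
     (\<forall>e\<in>E. \<exists>p\<in>P. \<exists>l\<in>L. e = {p, l})"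

definition green :: "'a set \<Rightarrow> 'a set set \<Rightarrow> ('a \<Rightarrow> 'a \<Rightarrow> 'a \<Rightarrow> bool) \<Rightarrow> bool" where
  "green L E opp \<longleftrightarrow> (\<forall>x\<in>L. trivial_opp (nbrs E x) (opp x))"

definition weed :: "'a set \<Rightarrow> 'a set \<Rightarrow> 'a set set \<Rightarrow> ('a \<Rightarrow> 'a \<Rightarrow> 'a \<Rightarrow> bool) \<Rightarrow> 'a list \<Rightarrow> bool" where
  "weed P L E opp w \<longleftrightarrow> is_path (P \<union> L) E w \<and> plen w = 4 \<and> \<not> straight opp w \<and>
     w ! 0 \<in> P \<and> w ! 2 \<in> P \<and> w ! 4 \<in> P \<and> gdist (P \<union> L) E (w ! 0) (w ! 4) = 4"

end

(*
  Write x opposed y if a root joins x and y. In a green Veldkamp quadrangle two vertices have at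
  most one common neighbour, and since every straight 5-path lies on a straight octagon, a root
  from x to y can be rotated about x so as to leave x along any given edge.

  If a X b Y c is a weed, every line through b opposite X at b is also opposite Y at b, and
  rotating roots through b then shows that the distinct lines X and Y have the same opposite
  vertices; so the quadrangle is not flat.

  Without weeds, every 4-path between two non-collinear points is straight at its middle point.
  Two distinct points with the same opposites are then seen to be opposed to each other, which is
  absurd. Two distinct lines U, W with the same opposites yield a line K through a point of U with
  every opposite of K opposite to U; transporting opposition between the ends of pairs of roots
  around a cycle of roots then contradicts the choice of K.
*)
theory Submission
  imports Defs
begin

lemma is_walk_singleton [simp]: "is_walk V E [x] \<longleftrightarrow> x \<in> V"
  by (simp add: is_walk_def)

lemma is_walk_Cons_Cons [simp]:
  "is_walk V E (x # y # xs) \<longleftrightarrow> x \<in> V \<and> {x, y} \<in> E \<and> is_walk V E (y # xs)"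
  unfolding is_walk_def by (auto simp: All_less_Suc2 less_Suc_eq_0_disj)

lemma is_path_singleton [simp]: "is_path V E [x] \<longleftrightarrow> x \<in> V"
  by (simp add: is_path_def)

lemma is_path_pair [simp]: "is_path V E [x, y] \<longleftrightarrow> x \<in> V \<and> y \<in> V \<and> {x, y} \<in> E"
  by (auto simp: is_path_def)

lemma is_path_Cons_Cons_Cons [simp]:
  "is_path V E (x # y # z # xs) \<longleftrightarrow> x \<in> V \<and> {x, y} \<in> E \<and> x \<noteq> z \<and> is_path V E (y # z # xs)"
  unfolding is_path_def by (auto simp: less_Suc_eq_0_disj)

lemma straight_singleton_pair [simp]: "straight opp [x]" "straight opp [x, y]"
  by (auto simp: straight_def)

lemma straight_Cons_Cons_Cons [simp]:
  "straight opp (x # y # z # xs) \<longleftrightarrow> opp y x z \<and> straight opp (y # z # xs)"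
  unfolding straight_def by (auto simp: less_Suc_eq_0_disj)

lemma is_path_mono: "is_path V E p \<Longrightarrow> V \<subseteq> V' \<Longrightarrow> E \<subseteq> E' \<Longrightarrow> is_path V' E' p"
  unfolding is_path_def is_walk_def by blast

lemma circ_edges_subset: "is_walk V E c \<Longrightarrow> circ_edges c \<subseteq> E"
  unfolding is_walk_def circ_edges_def by auto

locale green_veldkamp_quadrangle =
  fixes P L :: "'a set" and E :: "'a set set" and opp :: "'a \<Rightarrow> 'a \<Rightarrow> 'a \<Rightarrow> bool"
  assumes quadrangle: "veldkamp_quadrangle P L E opp"
    and green_lines: "green L E opp"
begin

abbreviation V :: "'a set" where "V \<equiv> P \<union> L"

definition adj :: "'a \<Rightarrow> 'a \<Rightarrow> bool" where
  "adj x y \<longleftrightarrow> {x, y} \<in> E"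

lemma edge_iff_adj: "{x, y} \<in> E \<longleftrightarrow> adj x y"
  by (simp add: adj_def)

lemma veldkamp_4gon: "veldkamp_ngon 4 V E opp"
  using quadrangle by (simp add: veldkamp_quadrangle_def)

lemma adj_sym: "adj x y \<Longrightarrow> adj y x"
  by (simp add: adj_def insert_commute)

lemma adj_cases: "adj x y \<Longrightarrow> x \<in> P \<and> y \<in> L \<or> x \<in> L \<and> y \<in> P"
  using quadrangle unfolding veldkamp_quadrangle_def adj_def by (metis doubleton_eq_iff)

lemma point_not_line: "x \<in> P \<Longrightarrow> x \<notin> L"
  using quadrangle by (auto simp: veldkamp_quadrangle_def)

lemma adj_in_V: "adj x y \<Longrightarrow> x \<in> V" "adj x y \<Longrightarrow> y \<in> V"
  using adj_cases by blast+

lemma adj_point: "x \<in> P \<Longrightarrow> adj x y \<Longrightarrow> y \<in> L"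
  using adj_cases point_not_line by blast

lemma adj_line: "x \<in> L \<Longrightarrow> adj x y \<Longrightarrow> y \<in> P"
  using adj_cases point_not_line by blast

lemma adj_type_flip: "adj x y \<Longrightarrow> y \<in> P \<longleftrightarrow> x \<notin> P"
  using adj_cases point_not_line by blast

lemma opposition_at: "v \<in> V \<Longrightarrow> opposition_rel {u. adj v u} (opp v)"
  and plump_at: "v \<in> V \<Longrightarrow> plump 2 {u. adj v u} (opp v)"
  using veldkamp_4gon
  by (simp_all add: veldkamp_ngon_def veldkamp_graph_def nbrs_def adj_def)

lemma opp_adj: "v \<in> V \<Longrightarrow> opp v x y \<Longrightarrow> adj v x \<and> adj v y"
  and opp_sym: "v \<in> V \<Longrightarrow> opp v x y \<Longrightarrow> opp v y x"
  and opp_irrefl: "v \<in> V \<Longrightarrow> \<not> opp v x x"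
  using opposition_at unfolding opposition_rel_def by blast+

lemma ex_adj: "v \<in> V \<Longrightarrow> \<exists>x. adj v x"
  using plump_at[unfolded plump_def, rule_format, of v "{}"] by auto

lemma ex_adj_opp: "v \<in> V \<Longrightarrow> adj v a \<Longrightarrow> \<exists>x. adj v x \<and> opp v x a"
  using plump_at[unfolded plump_def, rule_format, of v "{a}"] by auto

lemma ex_adj_opp2: "v \<in> V \<Longrightarrow> adj v a \<Longrightarrow> adj v b \<Longrightarrow> \<exists>x. adj v x \<and> opp v x a \<and> opp v x b"
  using plump_at[unfolded plump_def, rule_format, of v "{a, b}"] by (auto simp: card_insert_if)

lemma green_opp: "l \<in> L \<Longrightarrow> adj l p \<Longrightarrow> adj l q \<Longrightarrow> p \<noteq> q \<Longrightarrow> opp l p q"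
  using green_lines unfolding green_def trivial_opp_def nbrs_def adj_def by blast

lemma straight_path_unique:
  assumes "is_path V E p" "straight opp p" "1 \<le> plen p" "plen p \<le> 3"
    and "is_path V E q" "straight opp q" "plen q \<le> plen p" "hd q = hd p" "last q = last p"
  shows "q = p"
proof -
  have "\<forall>k p q. 1 \<le> k \<and> k \<le> 3 \<and> is_path V E p \<and> straight opp p \<and> plen p = k \<and>
      is_path V E q \<and> straight opp q \<and> plen q \<le> k \<and> hd q = hd p \<and> last q = last p \<longrightarrow> q = p"
    using veldkamp_4gon unfolding veldkamp_ngon_def by simp
  then show ?thesis
    using assms by blast
qed

lemma straight_5path_in_octagon:
  assumes "is_path V E p" "straight opp p" "plen p = 5"
  shows "\<exists>c. closed_path V E c \<and> plen c = 8 \<and> straight_circuit opp c \<and> path_in_circuit c p"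
  using veldkamp_4gon assms unfolding veldkamp_ngon_def by simp

lemma common_nbr_unique:
  assumes "p \<noteq> q" "adj l p" "adj l q" "adj m p" "adj m q"
  shows "l = m"
proof -
  have straight_2path: "is_path V E [x, k, y] \<and> straight opp [x, k, y]"
    if "x \<in> P" "x \<noteq> y" "adj k x" "adj k y" for x y k
    using that adj_in_V adj_point adj_sym green_opp by (auto simp: adj_def)
  have point_case: "k = k'" if "x \<in> P" "x \<noteq> y" "adj k x" "adj k y" "adj k' x" "adj k' y"
    for x y k k'
    using straight_path_unique[of "[x, k, y]" "[x, k', y]"] straight_2path[OF that(1,2)] that(3-)
    by (simp add: plen_def)
  show ?thesis
  proof (cases "p \<in> P")
    case True
    then show ?thesis using point_case assms by blast
  next
    case False
    then have "l \<in> P" using assms(2) adj_cases by blast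
    then show ?thesis using point_case[of l m p q] assms adj_sym by blast
  qed
qed

end

locale straight_octagon = green_veldkamp_quadrangle +
  fixes c :: "'a list"
  assumes closed: "closed_path (P \<union> L) E c"
    and octagon_length: "plen c = 8"
    and octagon_straight: "straight_circuit opp c"
begin

(* Since c ! 8 = c ! 0, the vertices of the octagon are indexed by residues mod 8. *)
definition oct :: "nat \<Rightarrow> 'a" where
  "oct i = c ! (i mod 8)"

lemma length_c: "length c = 9"
  using octagon_length by (simp add: plen_def)

lemma last_eq_first: "c ! 8 = c ! 0"
proof -
  have "c \<noteq> []" using length_c by auto
  then show ?thesis
    using closed length_c by (simp add: closed_path_def hd_conv_nth last_conv_nth)
qed

lemma oct_cong: "i mod 8 = j mod 8 \<Longrightarrow> oct i = oct j"
  by (simp add: oct_def)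

lemma oct_in_set: "oct i \<in> set c"
  using length_c by (simp add: oct_def)

lemma nth_circ_edge: "j < 8 \<Longrightarrow> {c ! j, c ! Suc j} \<in> circ_edges c"
  unfolding circ_edges_def using length_c by auto

lemma oct_eq_nth: "k \<le> 8 \<Longrightarrow> i mod 8 = k mod 8 \<Longrightarrow> oct i = c ! k"
  using last_eq_first by (cases "k = 8") (simp_all add: oct_def)

lemma set_c_oct: "x \<in> set c \<Longrightarrow> \<exists>i. x = oct i"
proof -
  assume "x \<in> set c"
  then obtain j where "j < 9" "x = c ! j" using length_c by (auto simp: in_set_conv_nth)
  then have "x = oct j" using oct_eq_nth[of j j] by simp
  then show ?thesis ..
qed

lemma oct_edge: "{oct i, oct (Suc i)} \<in> circ_edges c"
proof -
  have "oct i = c ! (i mod 8)" by (simp add: oct_def)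
  moreover have "oct (Suc i) = c ! Suc (i mod 8)"
    by (rule oct_eq_nth) (simp_all add: mod_Suc_eq)
  ultimately show ?thesis using nth_circ_edge[of "i mod 8"] by simp
qed

lemma circ_edge_oct: "e \<in> circ_edges c \<Longrightarrow> \<exists>i. e = {oct i, oct (Suc i)}"
proof -
  assume "e \<in> circ_edges c"
  then obtain j where "j < 8" "e = {c ! j, c ! Suc j}"
    unfolding circ_edges_def using length_c by auto
  moreover from \<open>j < 8\<close> have "oct j = c ! j" "oct (Suc j) = c ! Suc j"
    by (simp_all add: oct_eq_nth)
  ultimately show ?thesis by (intro exI[of _ j]) simp
qed

lemma oct_adj: "adj (oct i) (oct (Suc i))"
  using oct_edge[of i] circ_edges_subset[of V E c] closed
  unfolding closed_path_def is_path_def adj_def by blast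

lemma oct_neq_plus2_in_range: "i mod 8 \<le> 6 \<Longrightarrow> oct i \<noteq> oct (i + 2)"
proof -
  assume i: "i mod 8 \<le> 6"
  have "c ! k \<noteq> c ! (k + 2)" if "k + 2 < 9" for k
    using that closed length_c by (simp add: closed_path_def is_path_def)
  moreover have "oct i = c ! (i mod 8)" by (simp add: oct_def)
  moreover have "oct (i + 2) = c ! (i mod 8 + 2)"
    by (rule oct_eq_nth) (use i in simp, rule mod_add_left_eq[symmetric])
  ultimately show ?thesis using i by simp
qed

lemma oct_type: "oct i \<in> P \<longleftrightarrow> (oct 0 \<in> P \<longleftrightarrow> even i)"
proof (induction i)
  case (Suc i)
  then show ?case using adj_type_flip[OF oct_adj[of i]] by simp
qed simp

lemma circuit_path_straight: "path_in_circuit c p \<Longrightarrow> is_path V E p \<and> straight opp p"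
  using octagon_straight closed is_path_mono[of "set c" "circ_edges c" p V E] circ_edges_subset[of V E c]
  unfolding straight_circuit_def path_in_circuit_def closed_path_def is_path_def is_walk_def
  by blast

lemma oct_neq_plus4:
  assumes "oct i \<noteq> oct (Suc (Suc i))" "oct (Suc i) \<noteq> oct (Suc (Suc (Suc i)))"
  shows "oct i \<noteq> oct (Suc (Suc (Suc (Suc i))))"
proof
  assume eq: "oct i = oct (Suc (Suc (Suc (Suc i))))"
  have "adj (oct (Suc i)) (oct i)" "adj (oct (Suc i)) (oct (Suc (Suc i)))"
    "adj (oct (Suc (Suc (Suc i)))) (oct i)" "adj (oct (Suc (Suc (Suc i)))) (oct (Suc (Suc i)))"
    using oct_adj[of i] oct_adj[of "Suc i"] oct_adj[of "Suc (Suc i)"] oct_adj[of "Suc (Suc (Suc i))"]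
      eq adj_sym
    by simp_all
  then show False using common_nbr_unique assms by blast
qed

lemma oct_neq_plus2: "oct i \<noteq> oct (i + 2)"
proof (cases "i mod 8 \<le> 6")
  case True
  then show ?thesis by (rule oct_neq_plus2_in_range)
next
  case False
  \<comment> \<open>closed_path does not exclude backtracking at the junction c ! 7, c ! 8 = c ! 0, c ! 1;
    there the two straight 3-paths from oct j0 to oct j3 around the octagon would coincide by VP2\<close>
  define j0 j1 j2 j3 j4 j5 j6
    where "j0 = i + 2" "j1 = Suc j0" "j2 = Suc j1" "j3 = Suc j2" "j4 = Suc j3" "j5 = Suc j4" "j6 = Suc j5"
  note js = this
  have in_range: "j0 mod 8 \<le> 6" "j1 mod 8 \<le> 6" "j2 mod 8 \<le> 6" "j3 mod 8 \<le> 6" "j4 mod 8 \<le> 6"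
    using False unfolding js by presburger+
  have plus: "j0 + 2 = j2" "j1 + 2 = j3" "j3 + 2 = j5" "j4 + 2 = j6" "j1 + 4 = j5"
    unfolding js by simp_all
  show ?thesis
  proof
    assume "oct i = oct (i + 2)"
    moreover have "oct i = oct j6" unfolding js by (rule oct_cong) simp
    ultimately have wrap: "oct j6 = oct j0" unfolding js by simp
    have "path_in_circuit c [oct j0, oct j1, oct j2, oct j3]"
      "path_in_circuit c [oct j0, oct j5, oct j4, oct j3]"
      unfolding path_in_circuit_def
      using oct_edge[of j0] oct_edge[of j1] oct_edge[of j2] oct_edge[of j3] oct_edge[of j4]
        oct_edge[of j5] oct_neq_plus2_in_range[of j0] oct_neq_plus2_in_range[of j1]
        oct_neq_plus2_in_range[of j3] oct_neq_plus2_in_range[of j4] in_range plus wrap oct_in_set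
      by (simp_all add: insert_commute js(2-)[symmetric])
    then have "is_path V E [oct j0, oct j1, oct j2, oct j3]" "straight opp [oct j0, oct j1, oct j2, oct j3]"
      "is_path V E [oct j0, oct j5, oct j4, oct j3]" "straight opp [oct j0, oct j5, oct j4, oct j3]"
      using circuit_path_straight by blast+
    then have "[oct j0, oct j5, oct j4, oct j3] = [oct j0, oct j1, oct j2, oct j3]"
      by (intro straight_path_unique) (simp_all add: plen_def)
    then have "oct j1 = oct j5" by simp
    moreover have "oct j1 \<noteq> oct j5"
      using oct_neq_plus4[of j1] oct_neq_plus2_in_range[OF in_range(2)]
        oct_neq_plus2_in_range[OF in_range(3)] js(3-)
      by simp
    ultimately show False by blast
  qed
qed

lemma oct_neq: "0 < d \<Longrightarrow> d < 8 \<Longrightarrow> oct i \<noteq> oct (i + d)"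
proof -
  assume d: "0 < d" "d < 8"
  have plus2: "oct j \<noteq> oct (Suc (Suc j))" for j
    using oct_neq_plus2[of j] by simp
  have "odd d \<or> d = 2 \<or> d = 4 \<or> d = 6" using d by presburger
  then consider "odd d" | "d = 2" | "d = 4" | "d = 6" by blast
  then show ?thesis
  proof cases
    case 1
    then show ?thesis using oct_type[of i] oct_type[of "i + d"] by auto
  next
    case 2
    then show ?thesis using plus2 by simp
  next
    case 3
    then show ?thesis using oct_neq_plus4[OF plus2 plus2] by (simp add: numeral_eq_Suc)
  next
    case 4
    have "oct (i + 6 + 2) = oct i" by (rule oct_cong) simp
    then show ?thesis using 4 oct_neq_plus2[of "i + 6"] by metis
  qed
qed

lemma oct_eq_iff: "oct i = oct j \<longleftrightarrow> i mod 8 = j mod 8"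
proof
  assume eq: "oct i = oct j"
  show "i mod 8 = j mod 8"
  proof (rule ccontr)
    assume ne: "i mod 8 \<noteq> j mod 8"
    have "oct (i mod 8) \<noteq> oct (j mod 8)"
    proof (cases "i mod 8 < j mod 8")
      case True
      then show ?thesis using oct_neq[of "j mod 8 - i mod 8" "i mod 8"] by simp
    next
      case False
      then have "oct (j mod 8) \<noteq> oct (i mod 8)"
        using ne oct_neq[of "i mod 8 - j mod 8" "j mod 8"] by simp
      then show ?thesis by metis
    qed
    then show False using eq by (simp add: oct_def)
  qed
qed (rule oct_cong)

lemma oct_plus_mult8: "oct (i + 8 * k) = oct i"
  by (simp add: oct_def)

lemma oct_plus8 [simp]: "oct (i + 8) = oct i" "oct (8 + i) = oct i"
  by (simp_all add: oct_def)

lemma oct_add_cong: "oct a = oct b \<Longrightarrow> oct (a + k) = oct (b + k)"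
  by (metis oct_eq_iff mod_add_left_eq)

lemma oct_neq_mod: "d mod 8 \<noteq> 0 \<Longrightarrow> oct i \<noteq> oct (i + d)"
proof -
  assume "d mod 8 \<noteq> 0"
  then have "oct i \<noteq> oct (i + d mod 8)" by (intro oct_neq) simp_all
  moreover have "oct (i + d mod 8) = oct (i + d)" by (simp add: oct_eq_iff mod_add_right_eq)
  ultimately show ?thesis by simp
qed

lemma circ_edge_from_oct: "{oct a, y} \<in> circ_edges c \<Longrightarrow> y = oct (a + 1) \<or> y = oct (a + 7)"
proof -
  assume "{oct a, y} \<in> circ_edges c"
  then obtain i where "{oct a, y} = {oct i, oct (Suc i)}" using circ_edge_oct by blast
  then have "oct a = oct i \<and> y = oct (Suc i) \<or> oct a = oct (Suc i) \<and> y = oct i"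
    unfolding doubleton_eq_iff by blast
  then show ?thesis
  proof (elim disjE conjE)
    assume "oct a = oct i" "y = oct (Suc i)"
    then show ?thesis using oct_add_cong[of a i 1] by simp
  next
    assume "oct a = oct (Suc i)" "y = oct i"
    then show ?thesis using oct_add_cong[of a "Suc i" 7] by simp
  qed
qed

lemma oct_step:
  assumes "s = 1 \<or> s = 7" "{oct (a + s), y} \<in> circ_edges c" "y \<noteq> oct a"
  shows "y = oct (a + 2 * s)"
  using circ_edge_from_oct[OF assms(2)] assms(1,3) by (auto simp: add.assoc)

lemma oct_edge_step: "s = 1 \<or> s = 7 \<Longrightarrow> {oct a, oct (a + s)} \<in> circ_edges c"
proof (elim disjE)
  assume "s = 1"
  then show ?thesis using oct_edge[of a] by simp
next
  assume "s = 7"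
  then show ?thesis using oct_edge[of "a + 7"] by (simp add: insert_commute)
qed

lemma path_in_octagon:
  assumes "path_in_circuit c xs" "2 \<le> length xs"
  shows "\<exists>i s. (s = 1 \<or> s = 7) \<and> (\<forall>k < length xs. xs ! k = oct (i + s * k))"
proof -
  have path: "is_path (set c) (circ_edges c) xs"
    using assms(1) by (simp add: path_in_circuit_def)
  then have edge: "{xs ! k, xs ! Suc k} \<in> circ_edges c" if "Suc k < length xs" for k
    using that by (simp add: is_path_def is_walk_def)
  have nb: "xs ! k \<noteq> xs ! (k + 2)" if "k + 2 < length xs" for k
    using path that by (simp add: is_path_def)
  have "xs ! 0 \<in> set c"
    using path assms(2) nth_mem[of 0 xs] by (auto simp: is_path_def is_walk_def)
  then obtain i where i: "xs ! 0 = oct i" using set_c_oct by blast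
  have "{oct i, xs ! 1} \<in> circ_edges c" using edge[of 0] i assms(2) by simp
  then have "xs ! 1 = oct (i + 1) \<or> xs ! 1 = oct (i + 7)" by (rule circ_edge_from_oct)
  then obtain s where s: "s = 1 \<or> s = 7" "xs ! 1 = oct (i + s)" by blast
  have "xs ! k = oct (i + s * k)" if "k < length xs" for k
    using that
  proof (induction k rule: less_induct)
    case (less k)
    consider "k = 0" | "k = 1" | n where "k = n + 2" by (metis add_2_eq_Suc' not0_implies_Suc One_nat_def)
    then show ?case
    proof cases
      case 3
      have "xs ! (n + 1) = oct (i + s * n + s)" "xs ! n = oct (i + s * n)"
        using less 3 by (simp_all add: algebra_simps)
      moreover have "{xs ! (n + 1), xs ! k} \<in> circ_edges c" "xs ! k \<noteq> xs ! n"
        using less.prems 3 edge[of "n + 1"] nb[of n] by simp_all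
      ultimately have "xs ! k = oct (i + s * n + 2 * s)"
        using oct_step[OF s(1)] by metis
      moreover have "i + s * n + 2 * s = i + s * k" using 3 by (simp add: algebra_simps)
      ultimately show ?thesis by simp
    qed (use i s in simp_all)
  qed
  then show ?thesis using s(1) by blast
qed

lemma oct_walk_in_circuit:
  assumes "s = 1 \<or> s = 7" "0 < n"
  shows "path_in_circuit c (map (\<lambda>k. oct (a + s * k)) [0..<n])" (is "path_in_circuit c ?w")
  unfolding path_in_circuit_def is_path_def is_walk_def
proof (intro conjI allI impI)
  fix k
  show "{?w ! k, ?w ! Suc k} \<in> circ_edges c" if "Suc k < length ?w"
    using that oct_edge_step[OF assms(1), of "a + s * k"] by (simp add: algebra_simps)
  show "?w ! k \<noteq> ?w ! (k + 2)" if "k + 2 < length ?w"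
  proof -
    have "oct (a + s * k) \<noteq> oct (a + s * k + 2 * s)"
      using assms(1) by (intro oct_neq_mod) auto
    moreover have "a + s * k + 2 * s = a + s * (k + 2)" by (simp add: algebra_simps)
    ultimately show ?thesis using that by simp
  qed
qed (use assms(2) oct_in_set in auto)

end

context green_veldkamp_quadrangle
begin

lemma straight_5path_wraps:
  assumes "is_path V E [x0, x1, x2, x3, x4, x5]" "straight opp [x0, x1, x2, x3, x4, x5]"
  shows "\<exists>w6 w7. is_path V E [x4, x5, w6, w7, x0, x1] \<and> straight opp [x4, x5, w6, w7, x0, x1]"
proof -
  obtain c where "closed_path V E c" "plen c = 8" "straight_circuit opp c"
    and in_c: "path_in_circuit c [x0, x1, x2, x3, x4, x5]"
    using straight_5path_in_octagon[OF assms] by (auto simp: plen_def)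
  then interpret straight_octagon P L E opp c by unfold_locales
  obtain i s where s: "s = 1 \<or> s = 7"
    and x: "\<forall>k < length [x0, x1, x2, x3, x4, x5]. [x0, x1, x2, x3, x4, x5] ! k = oct (i + s * k)"
    using path_in_octagon[OF in_c] by auto
  have "oct (i + s * 4 + s * 4) = x0" "oct (i + s * 4 + s * 5) = x1"
    using x[rule_format, of 0] x[rule_format, of 1] oct_plus_mult8[of i s] oct_plus_mult8[of "i + s" s]
    by (simp_all add: algebra_simps)
  moreover have "x4 = oct (i + s * 4)" "x5 = oct (i + s * 4 + s * 1)"
    using x[rule_format, of 4] x[rule_format, of 5] by (simp_all add: algebra_simps)
  moreover have "path_in_circuit c (map (\<lambda>k. oct (i + s * 4 + s * k)) [0..<6])"
    using oct_walk_in_circuit s by simp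
  ultimately have "path_in_circuit c [x4, x5, oct (i + s * 4 + s * 2), oct (i + s * 4 + s * 3), x0, x1]"
    by (simp add: upt_rec)
  then show ?thesis using circuit_path_straight by blast
qed

definition root :: "'a \<Rightarrow> 'a \<Rightarrow> 'a \<Rightarrow> 'a \<Rightarrow> 'a \<Rightarrow> bool" where
  "root a b c d e \<longleftrightarrow> is_path V E [a, b, c, d, e] \<and> straight opp [a, b, c, d, e]"

lemma root_iff:
  "root a b c d e \<longleftrightarrow> adj a b \<and> adj b c \<and> adj c d \<and> adj d e \<and> a \<noteq> c \<and> b \<noteq> d \<and> c \<noteq> e
     \<and> opp b a c \<and> opp c b d \<and> opp d c e"
  unfolding root_def using adj_in_V by (auto simp: edge_iff_adj)

abbreviation opposed :: "'a \<Rightarrow> 'a \<Rightarrow> bool" where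
  "opposed \<equiv> opposite 4 V E opp"

lemma opposed_iff_root: "opposed x y \<longleftrightarrow> (\<exists>a b c. root x a b c y)"
proof
  assume "opposed x y"
  then obtain p where p: "is_path V E p" "straight opp p" "plen p = 4" "hd p = x" "last p = y"
    unfolding opposite_def by blast
  then have "length p = 5" by (cases p) (auto simp: plen_def is_path_def is_walk_def)
  then obtain a b c d e where "p = [a, b, c, d, e]"
    by (auto simp: length_Suc_conv numeral_eq_Suc)
  then show "\<exists>a b c. root x a b c y" using p unfolding root_def by auto
next
  assume "\<exists>a b c. root x a b c y"
  then obtain a b c where "root x a b c y" by blast
  then show "opposed x y"
    unfolding opposite_def root_def by (intro exI[of _ "[x, a, b, c, y]"]) (simp add: plen_def)
qed

lemma root_rev: "root a b c d e \<Longrightarrow> root e d c b a"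
  unfolding root_iff by (metis adj_in_V(1) adj_sym opp_sym)

lemma opposed_sym: "opposed x y \<Longrightarrow> opposed y x"
  unfolding opposed_iff_root using root_rev by blast

lemma root_continue:
  assumes "root x0 x1 x2 x3 x4" "adj x4 x5" "opp x4 x3 x5"
  shows "\<exists>w6 w7. root x5 w6 w7 x0 x1 \<and> opp x5 x4 w6"
proof -
  have "x3 \<noteq> x5" using assms(2,3) adj_in_V opp_irrefl by blast
  then have "is_path V E [x0, x1, x2, x3, x4, x5]" "straight opp [x0, x1, x2, x3, x4, x5]"
    using assms adj_in_V unfolding root_iff by (auto simp: edge_iff_adj)
  then obtain w6 w7 where
    "is_path V E [x4, x5, w6, w7, x0, x1]" "straight opp [x4, x5, w6, w7, x0, x1]"
    using straight_5path_wraps by blast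
  then show ?thesis unfolding root_iff by (auto simp: edge_iff_adj)
qed

lemma root_via:
  assumes "opposed x y" "adj x r"
  shows "\<exists>a b. root x r a b y"
proof -
  obtain x1 x2 x3 where p: "root x x1 x2 x3 y" using assms(1) opposed_iff_root by blast
  show ?thesis
  proof (cases "r = x1")
    case True
    then show ?thesis using p by blast
  next
    case False
    \<comment> \<open>rotate the root about x: two applications of root_continue\<close>
    have xV: "x \<in> V" using assms(2) adj_in_V by blast
    have "adj x x1" using p root_iff by blast
    then obtain s where s: "adj x s" "opp x s r" "opp x s x1"
      using ex_adj_opp2[OF xV assms(2)] by blast
    have "root s x x1 x2 x3"
      using p s opp_sym[OF xV] opp_irrefl[OF xV] adj_sym unfolding root_iff by metis
    then obtain w6 w7 where "root y w6 w7 s x"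
      using root_continue p unfolding root_iff by blast
    then have q: "root x s w7 w6 y" by (rule root_rev)
    then have "root r x s w7 w6"
      using s opp_sym[OF xV] opp_irrefl[OF xV] adj_sym assms(2) unfolding root_iff by metis
    then obtain u6 u7 where "root y u6 u7 r x"
      using root_continue q unfolding root_iff by blast
    then show ?thesis using root_rev by blast
  qed
qed

lemma root_via_end: "opposed x y \<Longrightarrow> adj r y \<Longrightarrow> \<exists>a b. root x a b r y"
  using root_via[OF opposed_sym] root_rev adj_sym by blast

lemma opposed_irrefl: "\<not> opposed x x"
proof
  assume "opposed x x"
  then obtain a b c where "root x a b c x" unfolding opposed_iff_root by blast
  then have "adj a x" "adj a b" "adj c b" "adj c x" "x \<noteq> b" "a \<noteq> c"
    unfolding root_iff using adj_sym by blast+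
  then show False using common_nbr_unique by blast
qed

definition collinear :: "'a \<Rightarrow> 'a \<Rightarrow> bool" where
  "collinear x y \<longleftrightarrow> (\<exists>l. adj l x \<and> adj l y)"

lemma collinear_sym: "collinear x y \<Longrightarrow> collinear y x"
  unfolding collinear_def by blast

lemma collinear_point: "x \<in> P \<Longrightarrow> collinear x y \<Longrightarrow> y \<in> P"
  unfolding collinear_def using adj_line adj_cases point_not_line by blast

lemma common_nbr_not_opposed:
  assumes "x \<noteq> y" "adj l x" "adj l y"
  shows "\<not> opposed x y"
proof
  assume "opposed x y"
  then obtain e N where "root x l e N y" using root_via assms(2) adj_sym by blast
  then have "e \<noteq> y" "adj l e" "adj N e" "adj N y" "l \<noteq> N"
    unfolding root_iff using adj_sym by blast+
  then show False using common_nbr_unique assms(3) by blast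
qed

lemma collinear_not_opposed: "x \<noteq> y \<Longrightarrow> collinear x y \<Longrightarrow> \<not> opposed x y"
  unfolding collinear_def using common_nbr_not_opposed by blast

lemma root_through_point:
  assumes "b \<in> P" "opp b X Y" "adj X a" "a \<noteq> b" "adj Y c" "c \<noteq> b"
  shows "root a X b Y c"
proof -
  have bV: "b \<in> V" using assms(1) by blast
  have o: "adj b X" "adj b Y" "X \<noteq> Y"
    using opp_adj[OF bV assms(2)] opp_irrefl[OF bV] assms(2) by auto
  then have "X \<in> L" "Y \<in> L" using assms(1) adj_point by blast+
  then have "opp X a b" "opp Y b c"
    using green_opp o assms(3-6) adj_sym by blast+
  then show ?thesis unfolding root_iff using assms o adj_sym by blast
qed

lemma opposed_through_point:
  "b \<in> P \<Longrightarrow> opp b X Y \<Longrightarrow> adj X a \<Longrightarrow> a \<noteq> b \<Longrightarrow> adj Y c \<Longrightarrow> c \<noteq> b \<Longrightarrow> opposed a c"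
  using root_through_point opposed_iff_root by blast

lemma root_end_swap:
  assumes "root u W z Z v" "Z \<in> L" "adj Z z'" "z' \<noteq> z"
  shows "opposed u z'"
proof -
  have "adj Z z" using assms(1) adj_sym unfolding root_iff by blast
  then have "opp Z z z'" using green_opp[OF assms(2) _ assms(3)] assms(4) by blast
  then have "root u W z Z z'" using assms(1,3,4) unfolding root_iff by blast
  then show ?thesis unfolding opposed_iff_root by blast
qed

lemma root_collinear_eq:
  assumes "root u W z Z v" "u \<in> P" "adj Z z'" "z' \<noteq> v" "collinear u z'" "z' \<noteq> u"
  shows "z' = z"
proof (rule ccontr)
  assume "z' \<noteq> z"
  have "W \<in> L" using assms(1,2) adj_point unfolding root_iff by blast
  then have "z \<in> P" using assms(1) adj_line unfolding root_iff by blast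
  then have "Z \<in> L" using assms(1) adj_point adj_sym unfolding root_iff by blast
  then have "opposed u z'" using root_end_swap[OF assms(1) _ assms(3) \<open>z' \<noteq> z\<close>] by blast
  then show False using collinear_not_opposed[OF assms(6)[symmetric] assms(5)] by blast
qed

lemma ex_root_extending: "adj x r \<Longrightarrow> \<exists>s t u. root x r s t u"
proof -
  assume r: "adj x r"
  have rV: "r \<in> V" using r adj_in_V by blast
  obtain s where s: "adj r s" "opp r s x" using ex_adj_opp[OF rV adj_sym[OF r]] by blast
  have sV: "s \<in> V" using s adj_in_V by blast
  obtain t where t: "adj s t" "opp s t r" using ex_adj_opp[OF sV adj_sym[OF s(1)]] by blast
  have tV: "t \<in> V" using t adj_in_V by blast
  obtain u where u: "adj t u" "opp t u s" using ex_adj_opp[OF tV adj_sym[OF t(1)]] by blast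
  have "root x r s t u"
    unfolding root_iff using r s t u opp_sym rV sV tV opp_irrefl by metis
  then show ?thesis by blast
qed

lemma ex_opposed: "x \<in> V \<Longrightarrow> \<exists>y. opposed x y"
  using ex_adj ex_root_extending opposed_iff_root by metis

lemma opposed_same_type:
  "opposed x y \<Longrightarrow> x \<in> P \<Longrightarrow> y \<in> P" "opposed x y \<Longrightarrow> x \<in> L \<Longrightarrow> y \<in> L"
  unfolding opposed_iff_root root_iff using adj_cases point_not_line by blast+

lemma opposed_in_V: "opposed x y \<Longrightarrow> y \<in> V"
  unfolding opposed_iff_root root_iff using adj_in_V by blast

lemma root_pair_opp_transfer:
  assumes pP: "p \<in> P" and p1: "root p L1 l1 M1 q" and p2: "root p L2 l2 M2 q"
    and o: "opp p L1 L2"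
  shows "opp q M1 M2"
proof -
  have a: "adj L1 l1" "l1 \<noteq> p" "adj L2 l2" "l2 \<noteq> p"
    using p1 p2 adj_sym unfolding root_iff by blast+
  have ol: "opposed l1 l2" using opposed_through_point[OF pP o a] .
  have "L1 \<in> L" using pP p1 adj_point unfolding root_iff by blast
  then have l1P: "l1 \<in> P" using a(1) adj_line by blast
  have b: "adj M2 l2" "adj M2 q" "q \<noteq> l2" "adj M1 l1" "adj M1 q" "q \<noteq> l1"
    using p1 p2 adj_sym unfolding root_iff by blast+
  obtain W z where r: "root l1 W z M2 l2" using root_via_end[OF ol b(1)] by blast
  have "q = z"
    using root_collinear_eq[OF r l1P b(2) b(3) _ b(6)] b(4,5) unfolding collinear_def by blast
  then have "W = M1"
    using common_nbr_unique[OF b(6)[symmetric]] r b(4,5) adj_sym unfolding root_iff by blast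
  then show ?thesis using r \<open>q = z\<close> unfolding root_iff by blast
qed

lemma opp_at_point_of_opposed_subset:
  assumes bP: "b \<in> P" and bK: "adj b K" and bU: "adj b U"
    and sub: "\<And>Z. opposed K Z \<Longrightarrow> opposed U Z" and bM: "adj b M" and KM: "opp b K M"
  shows "opp b U M"
proof -
  have bV: "b \<in> V" using bP by blast
  have M_line: "M \<in> L" using bP bM adj_point by blast
  then have MV: "M \<in> V" by blast
  obtain m where m: "adj M m" "opp M m b" using ex_adj_opp[OF MV adj_sym[OF bM]] by blast
  have mb: "m \<noteq> b" using m opp_irrefl[OF MV] by blast
  have mP: "m \<in> P" using M_line m adj_line by blast
  then have mV: "m \<in> V" by blast
  obtain S where S: "adj m S" "opp m S M" using ex_adj_opp[OF mV adj_sym[OF m(1)]] by blast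
  have "opp M b m" using opp_sym[OF MV m(2)] .
  then have "root K b M m S"
    unfolding root_iff using bK bM m(1) S KM opp_sym[OF mV S(2)] opp_irrefl[OF bV]
      opp_irrefl[OF mV] mb adj_sym by metis
  then have "opposed U S" using sub opposed_iff_root by blast
  then obtain M' s' where q: "root U b M' s' S" using root_via adj_sym[OF bU] by blast
  show ?thesis
  proof (cases "s' = m")
    case True
    then have "M' = M"
      using common_nbr_unique[OF mb[symmetric]] q bM m(1) adj_sym unfolding root_iff by blast
    then show ?thesis using q unfolding root_iff by blast
  next
    case False
    have "adj S s'" "b \<noteq> s'" "adj M' b" "adj M' s'" using q adj_sym unfolding root_iff by blast+
    then have "opposed b s'"
      using opposed_through_point[OF mP opp_sym[OF mV S(2)] adj_sym[OF bM] mb[symmetric]] False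
      by blast
    then show ?thesis
      using common_nbr_not_opposed \<open>b \<noteq> s'\<close> \<open>adj M' b\<close> \<open>adj M' s'\<close> by blast
  qed
qed

(* A 4-path from a point a that is not straight at its middle point b; at the lines X and Y it
   is straight automatically, since lines are green. *)
definition bent :: "'a \<Rightarrow> 'a \<Rightarrow> 'a \<Rightarrow> 'a \<Rightarrow> 'a \<Rightarrow> bool" where
  "bent a X b Y c \<longleftrightarrow> a \<in> P \<and> adj X a \<and> adj X b \<and> adj Y b \<and> adj Y c \<and> a \<noteq> b \<and> b \<noteq> c \<and> X \<noteq> Y
     \<and> \<not> opp b X Y"

lemma bent_types: "bent a X b Y c \<Longrightarrow> X \<in> L \<and> b \<in> P \<and> Y \<in> L \<and> c \<in> P"
  unfolding bent_def using adj_point adj_line adj_sym by metis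

lemma bent_rev: "bent a X b Y c \<Longrightarrow> bent c Y b X a"
  using bent_types[of a X b Y c] opp_sym[of b Y X] unfolding bent_def by blast

lemma walk_shorter_than_4:
  assumes "is_walk V E w" "hd w = a" "last w = c" "a \<in> P" "c \<in> P" "plen w < 4"
  shows "a = c \<or> collinear a c"
proof -
  have "1 \<le> length w" "length w \<le> 4" using assms(1,6) by (auto simp: is_walk_def plen_def Suc_le_eq)
  then have "length w = 1 \<or> length w = 2 \<or> length w = 3 \<or> length w = 4" by linarith
  then consider x where "w = [x]" | x y where "w = [x, y]" | x y z where "w = [x, y, z]"
    | x y z t where "w = [x, y, z, t]"
    by (auto simp: length_Suc_conv numeral_eq_Suc)
  then show ?thesis
  proof cases
    case 1
    then show ?thesis using assms by simp
  next
    case 2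
    then have "adj a c" using assms by (simp add: edge_iff_adj)
    then show ?thesis using assms(4,5) adj_point point_not_line by blast
  next
    case 3
    then have "adj a y" "adj y c" using assms by (simp_all add: edge_iff_adj)
    then show ?thesis using adj_sym unfolding collinear_def by blast
  next
    case 4
    then have "adj a y" "adj y z" "adj z c" using assms by (simp_all add: edge_iff_adj)
    then show ?thesis using assms(4,5) adj_point adj_line point_not_line by blast
  qed
qed

lemma gdist_le: "is_walk V E w \<Longrightarrow> hd w = a \<Longrightarrow> last w = c \<Longrightarrow> gdist V E a c \<le> plen w"
  unfolding gdist_def by (rule Least_le) blast

lemma gdist_points_eq_4:
  assumes "a \<in> P" "c \<in> P" "is_walk V E w" "hd w = a" "last w = c" "plen w = 4"
  shows "gdist V E a c = 4 \<longleftrightarrow> a \<noteq> c \<and> \<not> collinear a c"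
proof
  assume d: "gdist V E a c = 4"
  show "a \<noteq> c \<and> \<not> collinear a c"
  proof
    show "a \<noteq> c" using d gdist_le[of "[a]" a c] assms(1) by (auto simp: plen_def)
    show "\<not> collinear a c"
    proof
      assume "collinear a c"
      then obtain l where "adj l a" "adj l c" unfolding collinear_def by blast
      then have "is_walk V E [a, l, c]" using adj_in_V adj_sym by (auto simp: edge_iff_adj)
      then show False using d gdist_le[of "[a, l, c]" a c] by (simp add: plen_def)
    qed
  qed
next
  assume far: "a \<noteq> c \<and> \<not> collinear a c"
  show "gdist V E a c = 4"
    unfolding gdist_def
  proof (rule Least_equality)
    show "\<exists>w. is_walk V E w \<and> hd w = a \<and> last w = c \<and> plen w = 4" using assms(3-) by blast
  next
    fix n
    assume "\<exists>w. is_walk V E w \<and> hd w = a \<and> last w = c \<and> plen w = n"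
    then obtain w' where "is_walk V E w'" "hd w' = a" "last w' = c" "plen w' = n" by blast
    then show "4 \<le> n" using walk_shorter_than_4[of w' a c] assms(1,2) far by fastforce
  qed
qed

lemma weed_iff_bent:
  "weed P L E opp w \<longleftrightarrow> (\<exists>a X b Y c. w = [a, X, b, Y, c] \<and> bent a X b Y c \<and> a \<noteq> c \<and> \<not> collinear a c)"
proof
  assume w: "weed P L E opp w"
  then have "length w = 5" by (cases w) (auto simp: weed_def plen_def is_path_def is_walk_def)
  then obtain a X b Y c where we: "w = [a, X, b, Y, c]"
    by (auto simp: length_Suc_conv numeral_eq_Suc)
  have path: "is_path V E [a, X, b, Y, c]" and bent_at_b: "\<not> straight opp [a, X, b, Y, c]"
    and types: "a \<in> P" "b \<in> P" "c \<in> P" and dist: "gdist V E a c = 4"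
    using w unfolding we weed_def by simp_all
  have p: "adj a X" "adj X b" "adj b Y" "adj Y c" "a \<noteq> b" "X \<noteq> Y" "b \<noteq> c"
    using path by (simp_all add: edge_iff_adj)
  then have "X \<in> L" "Y \<in> L" using types adj_point by blast+
  then have "opp X a b" "opp Y b c" using green_opp p adj_sym by blast+
  then have "bent a X b Y c" using p types bent_at_b adj_sym unfolding bent_def by auto
  moreover have "a \<noteq> c \<and> \<not> collinear a c"
    using gdist_points_eq_4[of a c "[a, X, b, Y, c]"] types dist path
    unfolding is_path_def by (simp add: plen_def)
  ultimately show "\<exists>a X b Y c. w = [a, X, b, Y, c] \<and> bent a X b Y c \<and> a \<noteq> c \<and> \<not> collinear a c"
    using we by blast
next
  assume "\<exists>a X b Y c. w = [a, X, b, Y, c] \<and> bent a X b Y c \<and> a \<noteq> c \<and> \<not> collinear a c"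
  then obtain a X b Y c where w: "w = [a, X, b, Y, c]" and bt: "bent a X b Y c"
    and far: "a \<noteq> c" "\<not> collinear a c" by blast
  have types: "a \<in> P" "b \<in> P" "c \<in> P" using bt bent_types unfolding bent_def by blast+
  have path: "is_path V E [a, X, b, Y, c]"
    using bt adj_in_V adj_sym unfolding bent_def by (auto simp: edge_iff_adj)
  have "gdist V E a c = 4"
    using gdist_points_eq_4[of a c "[a, X, b, Y, c]"] types path far
    unfolding is_path_def by (simp add: plen_def)
  moreover have "\<not> straight opp [a, X, b, Y, c]" using bt unfolding bent_def by simp
  ultimately show "weed P L E opp w"
    using w path types unfolding weed_def by (simp add: plen_def)
qed

lemma bent_not_opposed:
  assumes bt: "bent a X b Y c"
  shows "\<not> opposed a c"
proof
  assume "opposed a c"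
  have a: "a \<in> P" "adj X a" "adj X b" "adj Y b" "adj Y c" "b \<noteq> c" "\<not> opp b X Y"
    using bt unfolding bent_def by blast+
  obtain b' Y' where p: "root a X b' Y' c" using root_via \<open>opposed a c\<close> a(2) adj_sym by blast
  then have b'P: "b' \<in> P" using a(1,2) adj_point adj_line adj_sym unfolding root_iff by blast
  show False
  proof (cases "b' = b")
    case True
    then have "Y' = Y" using common_nbr_unique[OF a(6)] p a(4,5) adj_sym unfolding root_iff by blast
    then show False using p True a(7) unfolding root_iff by blast
  next
    case False
    have "opp b' X Y'" "adj Y' c" "c \<noteq> b'" using p unfolding root_iff by blast+
    then have "opposed b c" using opposed_through_point[OF b'P _ a(3)] False by blast
    then show False using common_nbr_not_opposed[OF a(6) a(4,5)] by blast
  qed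
qed

lemma not_opposed_along_line:
  assumes "x \<in> P" "x \<noteq> y" "\<not> collinear x y" "\<not> opposed x y" "collinear v y" "v \<noteq> y"
  shows "\<not> opposed v x"
proof
  assume "opposed v x"
  then have o: "opposed x v" by (rule opposed_sym)
  obtain Z where Z: "adj Z v" "adj Z y" using assms(5) unfolding collinear_def by blast
  obtain W z where p: "root x W z Z v" using root_via_end[OF o Z(1)] by blast
  have "W \<in> L" using p assms(1) adj_point unfolding root_iff by blast
  then have "z \<in> P" using p adj_line unfolding root_iff by blast
  then have ZL: "Z \<in> L" using p adj_point adj_sym unfolding root_iff by blast
  show False
  proof (cases "y = z")
    case True
    then have "collinear x y" using p adj_sym unfolding root_iff collinear_def by blast
    then show False using assms(3) by blast
  next
    case False
    then have "opposed x y" using root_end_swap[OF p ZL Z(2)] by blast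
    then show False using assms(4) by blast
  qed
qed

lemma collinear_of_root_end:
  assumes "a \<in> P" "a \<noteq> c" "\<not> collinear a c" "\<not> opposed a c" "collinear w c" "w \<noteq> c"
    and "Z \<in> L" "adj Z w" "adj Z s" "opposed a s"
  shows "collinear a w"
proof -
  obtain W z where q: "root a W z Z s" using root_via_end[OF assms(10,9)] by blast
  have "w = z"
  proof (rule ccontr)
    assume "w \<noteq> z"
    then have "opposed a w" using root_end_swap[OF q assms(7,8)] by blast
    then show False using not_opposed_along_line[OF assms(1-6)] opposed_sym by blast
  qed
  then show ?thesis using q adj_sym unfolding root_iff collinear_def by blast
qed

lemma line_meets_collinear:
  assumes xP: "x \<in> P" and far: "x \<noteq> y" "\<not> collinear x y" "\<not> opposed x y"
    and Xx: "adj X x" and Xb: "adj X b" and Yy: "adj Y y" and Yb: "adj Y b" and Ry: "adj R y"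
  shows "\<exists>v. adj R v \<and> v \<noteq> y \<and> collinear v x"
proof -
  have "X \<in> L" using xP Xx adj_sym adj_point by blast
  then have bP: "b \<in> P" using Xb adj_line by blast
  then have bV: "b \<in> V" by blast
  have xb: "x \<noteq> b" "y \<noteq> b" using far(2) Xx Xb Yy Yb unfolding collinear_def by blast+
  obtain M where M: "adj b M" "opp b M X" "opp b M Y"
    using ex_adj_opp2[OF bV adj_sym[OF Xb] adj_sym[OF Yb]] by blast
  have MV: "M \<in> V" using M adj_in_V by blast
  obtain m where m: "adj M m" "opp M m b" using ex_adj_opp[OF MV adj_sym[OF M(1)]] by blast
  have mb: "m \<noteq> b" using m opp_irrefl[OF MV] by blast
  have oxm: "opposed x m"
    using opposed_through_point[OF bP opp_sym[OF bV M(2)] Xx xb(1) m(1) mb] .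
  have oym: "opposed m y"
    using opposed_sym[OF opposed_through_point[OF bP opp_sym[OF bV M(3)] Yy xb(2) m(1) mb]] .
  obtain S v where p: "root m S v R y" using root_via_end[OF oym Ry] by blast
  have v: "adj R v" "v \<noteq> y" "adj S m" "adj S v" using p adj_sym unfolding root_iff by blast+
  have "m \<in> P" using m M bP adj_point adj_line by blast
  then have SL: "S \<in> L" using v(3) adj_sym adj_point by blast
  have "collinear v y" using v(1) Ry unfolding collinear_def by blast
  then have "collinear x v" using collinear_of_root_end[OF xP far _ v(2) SL v(4) v(3) oxm] by blast
  then show ?thesis using v collinear_sym by blast
qed

lemma weed_middle_opp_transfer:
  assumes bt: "bent a X b Y c" and far: "a \<noteq> c" "\<not> collinear a c"
    and bN: "adj b N" and XN: "opp b X N"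
  shows "opp b Y N"
proof (rule ccontr)
  assume nYN: "\<not> opp b Y N"
  have aP: "a \<in> P" and aX: "adj X a" and bX: "adj X b" and bY: "adj Y b" and cY: "adj Y c"
    and ab: "a \<noteq> b" and bc: "b \<noteq> c" and nXY: "\<not> opp b X Y"
    using bt unfolding bent_def by blast+
  have XL: "X \<in> L" and bP: "b \<in> P" and cP: "c \<in> P" using bent_types[OF bt] by blast+
  then have XV: "X \<in> V" and cV: "c \<in> V" by blast+
  have NL: "N \<in> L" using bP bN adj_point by blast
  then have NV: "N \<in> V" by blast
  have noac: "\<not> opposed a c" using bent_not_opposed[OF bt] .
  obtain a' where a': "adj X a'" "opp X a' a" "opp X a' b" using ex_adj_opp2[OF XV aX bX] by blast
  have a'n: "a' \<noteq> a" "a' \<noteq> b" using a' opp_irrefl[OF XV] by blast+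
  have a'P: "a' \<in> P" using XL a'(1) adj_line by blast
  obtain s where s: "adj N s" "opp N s b" using ex_adj_opp[OF NV adj_sym[OF bN]] by blast
  have sb: "s \<noteq> b" using s opp_irrefl[OF NV] by blast
  have sP: "s \<in> P" using NL s adj_line by blast
  have oas: "opposed a s" using opposed_through_point[OF bP XN aX ab s(1) sb] .
  have oa's: "opposed a' s" using opposed_through_point[OF bP XN a'(1) a'n(2) s(1) sb] .
  have sc: "s \<noteq> c" using oas noac by blast
  have ncs: "\<not> collinear s c"
    using not_opposed_along_line[OF aP far noac, of s] sc oas opposed_sym by blast
  have "bent c Y b N s"
    using cP cY bY bN s(1) bc sb nYN nXY XN adj_sym unfolding bent_def by blast
  then have nocs: "\<not> opposed c s" by (rule bent_not_opposed)
  obtain C where C: "adj c C" "opp c C Y" using ex_adj_opp[OF cV adj_sym[OF cY]] by blast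
  obtain w where w: "adj C w" "w \<noteq> c" "collinear w s"
    using line_meets_collinear[OF sP sc ncs _ s(1) adj_sym[OF bN] cY bY adj_sym[OF C(1)]]
      nocs opposed_sym by blast
  have wc: "collinear w c" using w C(1) adj_sym unfolding collinear_def by blast
  have obw: "opposed b w" using opposed_through_point[OF cP opp_sym[OF cV C(2)] bY bc w(1) w(2)] .
  obtain Z where Z: "adj Z w" "adj Z s" using w(3) unfolding collinear_def by blast
  have wP: "w \<in> P" using collinear_point[OF cP collinear_sym[OF wc]] .
  have ZL: "Z \<in> L" using wP Z(1) adj_sym adj_point by blast
  have caw: "collinear a w" using collinear_of_root_end[OF aP far noac wc w(2) ZL Z oas] .
  have na'c: "\<not> opposed a' c"
    using not_opposed_along_line[OF cP far(1)[symmetric] _ _ _ a'n(1)] far(2) noac a'(1) aX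
      collinear_sym opposed_sym
    unfolding collinear_def by blast
  have a'c: "a' \<noteq> c" using oa's nocs by blast
  have nca'c: "\<not> collinear a' c"
    using not_opposed_along_line[OF sP sc ncs _ _ a'c] nocs opposed_sym oa's by blast
  have ca'w: "collinear a' w" using collinear_of_root_end[OF a'P a'c nca'c na'c wc w(2) ZL Z oa's] .
  \<comment> \<open>both a and a' are now the point of X collinear with w\<close>
  obtain W z where q: "root w W z X b" using root_via_end[OF opposed_sym[OF obw] bX] by blast
  have "a = z" using root_collinear_eq[OF q wP aX ab collinear_sym[OF caw]] wc far(2) by blast
  moreover have "a' = z"
    using root_collinear_eq[OF q wP a'(1) a'n(2) collinear_sym[OF ca'w]] wc nca'c by blast
  ultimately show False using a'n(1) by simp
qed

lemma bent_lines_opposed_subset: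
  assumes bt: "bent a X b Y c" and far: "a \<noteq> c" "\<not> collinear a c" and XZ: "opposed X Z"
  shows "opposed Y Z"
proof -
  have bX: "adj X b" and bY: "adj Y b" using bt unfolding bent_def by blast+
  have bV: "b \<in> V" using bent_types[OF bt] by blast
  obtain N s where p: "root X b N s Z" using root_via[OF XZ bX] by blast
  then have "opp b X N" "adj b N" unfolding root_iff by blast+
  then have "opp b Y N" using weed_middle_opp_transfer[OF bt far] by blast
  then have "root Y b N s Z" using p bY adj_sym opp_irrefl[OF bV] unfolding root_iff by metis
  then show ?thesis unfolding opposed_iff_root by blast
qed

lemma weed_not_flat: "weed P L E opp w \<Longrightarrow> \<not> flat 4 V E opp"
proof -
  assume "weed P L E opp w"
  then obtain a X b Y c where bt: "bent a X b Y c" and far: "a \<noteq> c" "\<not> collinear a c"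
    using weed_iff_bent by blast
  have "opposed X Z \<longleftrightarrow> opposed Y Z" for Z
    using bent_lines_opposed_subset bt bent_rev[OF bt] far collinear_sym by metis
  then have "op_set 4 V E opp X = op_set 4 V E opp Y" unfolding op_set_def by simp
  moreover have "X \<in> V" "Y \<in> V" "X \<noteq> Y" using bt adj_in_V unfolding bent_def by blast+
  ultimately show ?thesis unfolding flat_def by blast
qed

lemma ex_adj_not_adj:
  assumes "U \<noteq> W" "W \<in> V"
  shows "\<exists>y. adj W y \<and> \<not> adj U y"
proof -
  obtain y0 where y0: "adj W y0" using ex_adj[OF assms(2)] by blast
  obtain y1 where y1: "adj W y1" "opp W y1 y0" using ex_adj_opp[OF assms(2) y0] by blast
  have "y1 \<noteq> y0" using y1 opp_irrefl[OF assms(2)] by blast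
  then have "\<not> adj U y0 \<or> \<not> adj U y1"
    using common_nbr_unique[of y0 y1 U W] y0 y1(1) assms(1) adj_sym by blast
  then show ?thesis using y0 y1(1) by blast
qed

lemma opposed_subset_of_same_opposites:
  assumes eq: "\<And>z. opposed U z \<longleftrightarrow> opposed W z" and Wy: "adj W y"
    and KL: "K \<in> L" and Ku: "adj K u" and Ky: "adj K y" and uy: "u \<noteq> y" and uU: "adj u U"
    and uP: "u \<in> P" and KZ: "opposed K Z"
  shows "opposed U Z"
proof -
  have uV: "u \<in> V" using uP by blast
  obtain M z where r: "root K u M z Z" using root_via[OF KZ Ku] by blast
  then have rf: "adj u M" "adj M z" "opp u K M" "u \<noteq> z" "K \<noteq> M"
    unfolding root_iff by blast+
  show ?thesis
  proof (cases "opp u U M")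
    case True
    then have "root U u M z Z" using r uU opp_irrefl[OF uV] adj_sym unfolding root_iff by metis
    then show ?thesis unfolding opposed_iff_root by blast
  next
    case False
    have M_line: "M \<in> L" using uP rf(1) adj_point by blast
    have "opp M u z" using green_opp[OF M_line adj_sym[OF rf(1)] rf(2) rf(4)] .
    then have "root y K u M z"
      unfolding root_iff using adj_sym[OF Ky] Ku rf uy green_opp[OF KL Ky Ku uy[symmetric]] by blast
    then have "opposed z y" using opposed_sym opposed_iff_root by blast
    then obtain A v where t: "root z A v W y" using root_via_end Wy by blast
    have "z \<in> P" using M_line rf(2) adj_line by blast
    then have zV: "z \<in> V" by blast
    have zA: "adj z A" using t unfolding root_iff by blast
    obtain N where N: "adj z N" "opp z N A" using ex_adj_opp[OF zV zA] by blast
    have "root N z A v W"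
      unfolding root_iff using t[unfolded root_iff] N adj_sym opp_irrefl[OF zV] by metis
    then have "opposed U N" using eq opposed_sym opposed_iff_root by blast
    then obtain M' z' where "root U u M' z' N" using root_via adj_sym[OF uU] by blast
    then have r2f: "adj M' u" "adj M' z'" "opp u U M'" "opp z' M' N" "u \<noteq> z'"
      using adj_sym unfolding root_iff by blast+
    show ?thesis
    proof (cases "z' = z")
      case True
      then have "M' = M" using common_nbr_unique[OF rf(4)] r2f(1,2) rf(1,2) adj_sym by metis
      then show ?thesis using r2f(3) False by blast
    next
      case False
      have z'P: "z' \<in> P" using r2f(1,2) uP adj_point adj_line adj_sym by blast
      then have "opposed u z"
        using opposed_through_point[OF z'P r2f(4) r2f(1) r2f(5) adj_sym[OF N(1)]] False by metis
      then show ?thesis using common_nbr_not_opposed[OF rf(4) adj_sym[OF rf(1)] rf(2)] by blast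
    qed
  qed
qed

end

locale weedless_green_veldkamp_quadrangle = green_veldkamp_quadrangle +
  assumes no_weeds: "\<nexists>w. weed P L E opp w"
begin

lemma bent_collinear: "bent a X b Y c \<Longrightarrow> a \<noteq> c \<Longrightarrow> collinear a c"
  using no_weeds weed_iff_bent by blast

lemma point_eq_of_same_opposites:
  assumes aP: "a \<in> P" and cP: "c \<in> P" and eq: "\<And>z. opposed a z \<longleftrightarrow> opposed c z"
  shows "a = c"
proof (rule ccontr)
  assume ac: "a \<noteq> c"
  have cV: "c \<in> V" using cP by blast
  have not_col: "\<not> collinear a c"
  proof
    assume "collinear a c"
    then obtain X where X: "adj X a" "adj X c" unfolding collinear_def by blast
    obtain Y d e where "root X c Y d e" using ex_root_extending[OF X(2)] by blast
    then have Y: "opp c X Y" "adj Y c" "adj Y d" "d \<noteq> c"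
      using adj_sym unfolding root_iff by blast+
    have "opposed a d" using opposed_through_point[OF cP Y(1) X(1) ac Y(3,4)] .
    then have "opposed c d" using eq by blast
    then show False using common_nbr_not_opposed[OF Y(4)[symmetric] Y(2,3)] by blast
  qed
  obtain z where az: "opposed a z" using ex_opposed aP by blast
  then have cz: "opposed z c" using eq opposed_sym by blast
  obtain C where C: "adj c C" using ex_adj[OF cV] by blast
  obtain W w where p: "root z W w C c" using root_via_end[OF cz adj_sym[OF C]] by blast
  have wC: "adj C w" "w \<noteq> c" "adj W z" "adj W w" using p adj_sym unfolding root_iff by blast+
  have CL: "C \<in> L" using cP C adj_point by blast
  have wP: "w \<in> P" using CL wC(1) adj_line by blast
  have wa: "w \<noteq> a" using not_col wC(1) C adj_sym unfolding collinear_def by blast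
  have WL: "W \<in> L" using wP wC(4) adj_sym adj_point by blast
  obtain W1 z1 where q: "root a W1 z1 W z" using root_via_end[OF az wC(3)] by blast
  have "w = z1"
  proof (rule ccontr)
    assume "w \<noteq> z1"
    then have "opposed a w" using root_end_swap[OF q WL wC(4)] by blast
    then have "opposed c w" using eq by blast
    then show False using common_nbr_not_opposed[OF wC(2)[symmetric] adj_sym[OF C] wC(1)] by blast
  qed
  then have aw: "adj W1 a" "adj W1 w" using q adj_sym unfolding root_iff by blast+
  have W1C: "W1 \<noteq> C" using not_col aw(1) C adj_sym unfolding collinear_def by blast
  have "opp w W1 C"
  proof (rule ccontr)
    assume "\<not> opp w W1 C"
    then have "bent a W1 w C c"
      using aP aw wC(1,2) C wa W1C adj_sym unfolding bent_def by blast
    then show False using bent_collinear ac not_col by blast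
  qed
  then have "opposed a c"
    using opposed_through_point[OF wP _ aw(1) wa[symmetric] adj_sym[OF C] wC(2)[symmetric]] by blast
  then show False using eq opposed_irrefl by blast
qed

lemma no_opposed_subset_lines:
  assumes KL: "K \<in> L" and UL: "U \<in> L" and KU: "K \<noteq> U" and bP: "b \<in> P"
    and bK: "adj b K" and bU: "adj b U" and sub: "\<And>Z. opposed K Z \<Longrightarrow> opposed U Z"
  shows False
proof -
  have bV: "b \<in> V" using bP by blast
  have at_b: "\<And>M. adj b M \<Longrightarrow> opp b K M \<Longrightarrow> opp b U M"
    using opp_at_point_of_opposed_subset[OF bP bK bU sub] by blast
  have nUK: "\<not> opp b U K" using at_b[OF bU] opp_irrefl[OF bV] opp_sym[OF bV] by blast
  obtain v Y d where "root b K v Y d" using ex_root_extending[OF bK] by blast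
  then have obd: "opposed b d" and v: "adj K v" "v \<noteq> b" and Y: "adj v Y" "opp v K Y"
    and d: "adj Y d" "d \<noteq> v"
    unfolding opposed_iff_root root_iff by blast+
  have vP: "v \<in> P" using KL v adj_line by blast
  obtain u A where "root b U u A d" using root_via[OF obd bU] by blast
  then have u: "u \<noteq> b" "adj U u" "adj A u" "adj A d" "u \<noteq> d"
    using adj_sym unfolding root_iff by blast+
  have uP: "u \<in> P" using UL u(2) adj_line by blast
  then have uV: "u \<in> V" by blast
  have uv: "u \<noteq> v" using common_nbr_unique[OF u(1)] u(2) v(1) bK bU adj_sym KU by metis
  have "bent u U b K v"
    using uP u(1,2) bU bK v KU nUK adj_sym unfolding bent_def by blast
  then obtain J where J: "adj J u" "adj J v" using bent_collinear uv unfolding collinear_def by blast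
  have nJY: "\<not> opp v J Y"
  proof
    assume "opp v J Y"
    then have "opposed u d" using opposed_through_point[OF vP _ J(1) uv d] by blast
    then show False using common_nbr_not_opposed[OF u(5,3,4)] by blast
  qed
  obtain Y' where Y': "adj u Y'" "opp u Y' J" "opp u Y' U"
    using ex_adj_opp2[OF uV adj_sym[OF J(1)] adj_sym[OF u(2)]] by blast
  have Y'V: "Y' \<in> V" using Y' adj_in_V by blast
  obtain d' where d': "adj Y' d'" "opp Y' d' u" using ex_adj_opp[OF Y'V adj_sym[OF Y'(1)]] by blast
  have d'u: "d' \<noteq> u" using d' opp_irrefl[OF Y'V] by blast
  have s1: "root v J u Y' d'"
    using root_through_point[OF uP opp_sym[OF uV Y'(2)] J(2) uv[symmetric] d'(1) d'u] .
  have s2: "root b U u Y' d'"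
    using root_through_point[OF uP opp_sym[OF uV Y'(3)] adj_sym[OF bU] u(1)[symmetric] d'(1) d'u] .
  have ovd': "opposed v d'" and obd': "opposed b d'"
    using s1 s2 unfolding opposed_iff_root by blast+
  obtain v' A' where s3: "root b K v' A' d'" using root_via[OF obd' bK] by blast
  have v'v: "v' \<noteq> v"
  proof
    assume "v' = v"
    then have "adj A' v" "adj A' d'" using s3 adj_sym unfolding root_iff by blast+
    moreover have "v \<noteq> d'" using ovd' opposed_irrefl by blast
    ultimately show False using common_nbr_not_opposed ovd' by blast
  qed
  have "opp K v v'" using green_opp[OF KL v(1)] s3 v'v unfolding root_iff by blast
  then have s4: "root v K v' A' d'" using s3 v(1) v'v adj_sym unfolding root_iff by blast
  obtain m B where s5: "root v Y m B d'" using root_via[OF ovd' Y(1)] by blast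
  then have Bd': "adj B d'" unfolding root_iff by blast
  obtain n L0 where s6: "root d' B n L0 b"
    using root_via[OF opposed_sym[OF obd'] adj_sym[OF Bd']] by blast
  have d'P: "d' \<in> P" using opposed_same_type(1)[OF obd' bP] .
  \<comment> \<open>transport opposition from v through d', b, d' back to v\<close>
  have "opp d' A' B" using root_pair_opp_transfer[OF vP s4 s5 Y(2)] .
  then have "opp b K L0" using root_pair_opp_transfer[OF d'P root_rev[OF s3] s6] by blast
  then have "opp b U L0" using at_b s6 adj_sym unfolding root_iff by blast
  then have "opp d' Y' B" using root_pair_opp_transfer[OF bP s2 root_rev[OF s6]] by blast
  then have "opp v J Y" using root_pair_opp_transfer[OF d'P root_rev[OF s1] root_rev[OF s5]] by blast
  then show False using nJY by blast
qed

lemma line_eq_of_same_opposites: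
  assumes UL: "U \<in> L" and WL: "W \<in> L" and eq: "\<And>z. opposed U z \<longleftrightarrow> opposed W z"
  shows "U = W"
proof (rule ccontr)
  assume "U \<noteq> W"
  then obtain y where y: "adj W y" "\<not> adj U y" using ex_adj_not_adj WL by blast
  have yP: "y \<in> P" using WL y(1) adj_line by blast
  obtain N l Z where root: "root W y N l Z" using ex_root_extending[OF y(1)] by blast
  then have N: "adj y N" "W \<noteq> N" and l: "adj N l" "l \<noteq> y" and Z: "adj l Z"
    unfolding root_iff by blast+
  have "opposed Z U" using root eq opposed_sym opposed_iff_root by blast
  then obtain M u where "root Z l M u U" using root_via adj_sym[OF Z(1)] by blast
  then have qf: "adj l M" "adj M u" "adj u U" "l \<noteq> u" "opp u M U" "opp M l u"
    unfolding root_iff by blast+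
  have uy: "u \<noteq> y" using qf(3) y(2) adj_sym by blast
  have uP: "u \<in> P" using UL qf(3) adj_sym adj_line by blast
  then have uV: "u \<in> V" by blast
  have lP: "l \<in> P" using yP N(1) l(1) adj_point adj_line by blast
  have "collinear u y"
  proof (cases "M = N")
    case True
    then show ?thesis using qf(2) N(1) adj_sym unfolding collinear_def by blast
  next
    case MN: False
    show ?thesis
    proof (cases "opp l M N")
      case True
      have "opp M u l" using opp_sym[OF _ qf(6)] lP qf(1) adj_point by blast
      moreover have "U \<noteq> M" using opp_sym[OF uV qf(5)] opp_irrefl[OF uV] by blast
      ultimately have "root U u M l N"
        unfolding root_iff
        using True MN qf(4) adj_sym[OF qf(3)] adj_sym[OF qf(2)] adj_sym[OF qf(1)] adj_sym[OF l(1)]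
          opp_sym[OF uV qf(5)]
        by blast
      then have "opposed W N" using eq opposed_iff_root by blast
      then show ?thesis using common_nbr_not_opposed[OF N(2) adj_sym[OF y(1)] N(1)] by blast
    next
      case False
      then have "bent u M l N y"
        using uP qf(2) adj_sym[OF qf(1)] l adj_sym[OF N(1)] qf(4)[symmetric] MN
        unfolding bent_def by blast
      then show ?thesis using bent_collinear uy by blast
    qed
  qed
  then obtain K where K: "adj K u" "adj K y" unfolding collinear_def by blast
  have KU: "K \<noteq> U" using K(2) y(2) by blast
  have KL: "K \<in> L" using uP K(1) adj_sym adj_point by blast
  show False
    using no_opposed_subset_lines[OF KL UL KU uP adj_sym[OF K(1)] qf(3)]
      opposed_subset_of_same_opposites[OF eq y(1) KL K uy qf(3) uP] by blast
qed

lemma flat: "flat 4 V E opp"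
  unfolding flat_def op_set_def
proof (intro ballI impI)
  fix x y
  assume "x \<in> V" "y \<in> V" and "{z \<in> V. opposed x z} = {z \<in> V. opposed y z}"
  then have eq: "\<And>z. opposed x z \<longleftrightarrow> opposed y z" using opposed_in_V by blast
  obtain z where "opposed x z" using ex_opposed \<open>x \<in> V\<close> by blast
  then have "x \<in> P \<and> y \<in> P \<or> x \<in> L \<and> y \<in> L"
    using eq opposed_same_type point_not_line \<open>x \<in> V\<close> \<open>y \<in> V\<close> by blast
  then show "x = y" using point_eq_of_same_opposites line_eq_of_same_opposites eq by blast
qed

end

theorem proposition4p14:
  fixes P L :: "'a set" and E :: "'a set set" and opp :: "'a \<Rightarrow> 'a \<Rightarrow> 'a \<Rightarrow> bool"
  assumes "veldkamp_quadrangle P L E opp"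
    and "green L E opp"
  shows "flat 4 (P \<union> L) E opp \<longleftrightarrow> \<not> (\<exists>w. weed P L E opp w)"
proof -
  interpret green_veldkamp_quadrangle P L E opp using assms by unfold_locales
  show ?thesis
  proof
    assume "\<not> (\<exists>w. weed P L E opp w)"
    then interpret weedless_green_veldkamp_quadrangle P L E opp by unfold_locales
    show "flat 4 (P \<union> L) E opp" by (rule flat)
  qed (use weed_not_flat in blast)
qed

end
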